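(* There is a constant $C > 0$ such that for all $\alpha > 0$ and all $u \in \mathrm{H}^1(\mathbb{R})$: $$|u|_{\mathrm{H}^{1/2}}^2 \leq C\left( \| u\|_{\mathrm{L}^2}^2 + |\log(\alpha)|\, |u|_{\mathrm{H}_w^{1/2}}^2 + \alpha \int_{\mathbb{R}} |\dot u|^2\right),$$ where $\dot u$ is the derivative of $u$.
   Context: $|u|_{\mathrm{H}^{1/2}}$ is the Slobodetski seminorm: $|u|_{\mathrm{H}^{1/2}}^2 = \iint_{\mathbb{R}^2} \frac{|u(x+y)-u(x)|^2}{|y|^{2}}\,\mathrm{d}x\,\mathrm{d}y$. For $u \in \mathrm{L}^2(\mathbb{R})$, $|u|_{\mathrm{H}^{1/2}_w}$ is the smallest $C \geq 0$ such that $\|u - u(\cdot + y)\|_{\mathrm{L}^2} \leq C|y|^{1/2}$ for all $y \in \mathbb{R}$. *)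

theory Defs
  imports "HOL-Analysis.Analysis"
begin

definition L2 :: "(real \<Rightarrow> real) \<Rightarrow> bool" where
  "L2 u \<longleftrightarrow> u \<in> borel_measurable lborel \<and> integrable lborel (\<lambda>x. (u x)\<^sup>2)"

definition L2_norm :: "(real \<Rightarrow> real) \<Rightarrow> real" where
  "L2_norm u = sqrt (\<integral>x. (u x)\<^sup>2 \<partial>lborel)"

definition test_fun :: "(real \<Rightarrow> real) \<Rightarrow> bool" where
  "test_fun \<phi> \<longleftrightarrow> (\<forall>x. \<phi> differentiable at x) \<and> continuous_on UNIV (deriv \<phi>)
      \<and> (\<exists>R. \<forall>x. \<bar>x\<bar> > R \<longrightarrow> \<phi> x = 0)"

definition weak_deriv :: "(real \<Rightarrow> real) \<Rightarrow> (real \<Rightarrow> real) \<Rightarrow> bool" where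
  "weak_deriv u v \<longleftrightarrow> (\<forall>\<phi>. test_fun \<phi> \<longrightarrow>
      (\<integral>x. u x * deriv \<phi> x \<partial>lborel) = - (\<integral>x. v x * \<phi> x \<partial>lborel))"

definition H1_with_deriv :: "(real \<Rightarrow> real) \<Rightarrow> (real \<Rightarrow> real) \<Rightarrow> bool" where
  "H1_with_deriv u v \<longleftrightarrow> L2 u \<and> L2 v \<and> weak_deriv u v"

definition H12_seminorm_sq :: "(real \<Rightarrow> real) \<Rightarrow> ennreal" where
  "H12_seminorm_sq u = (\<integral>\<^sup>+ p. ennreal ((u (fst p + snd p) - u (fst p))\<^sup>2 / (snd p)\<^sup>2)
      \<partial>(lborel \<Otimes>\<^sub>M lborel))"

definition H12w_seminorm :: "(real \<Rightarrow> real) \<Rightarrow> real" where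
  "H12w_seminorm u = Inf {C. C \<ge> 0 \<and> (\<forall>y. L2_norm (\<lambda>x. u x - u (x + y)) \<le> C * sqrt \<bar>y\<bar>)}"

end

theory Submission
  imports Defs
begin

text \<open>Put \<open>T(y) = \<parallel>u(\<cdot> + y) - u\<parallel>\<^sup>2\<close>. By Tonelli the squared Slobodetski seminorm is
  \<open>\<integral> T(y) / y\<^sup>2 dy\<close>, and \<open>T\<close> obeys three bounds: \<open>T(y) \<le> 4 \<parallel>u\<parallel>\<^sup>2\<close>; \<open>T(y) \<le> W\<^sup>2 |y|\<close> with \<open>W\<close> the
  weak seminorm; and \<open>T(y) \<le> y\<^sup>2 \<parallel>u'\<parallel>\<^sup>2\<close>, because \<open>u(x + y) - u(x) = \<integral>\<^sub>0\<^sup>y u'(x + t) dt\<close> almost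
  everywhere (both sides have the same pairing with every test function, and the fundamental lemma
  of the calculus of variations, proved with bump functions, identifies them). Using the last bound
  for \<open>|y| \<le> m = min \<alpha> 1\<close>, the weak one for \<open>m \<le> |y| \<le> 1\<close> and the first for \<open>|y| \<ge> 1\<close> bounds the
  integral by \<open>2 (4 \<parallel>u\<parallel>\<^sup>2 + m \<parallel>u'\<parallel>\<^sup>2 + |ln m| W\<^sup>2)\<close>.\<close>

section \<open>Bump functions approximating the indicator of an interval\<close>

definition pos_sq :: "real \<Rightarrow> real" where
  "pos_sq t = (max 0 t)\<^sup>2"

lemma has_real_derivative_pos_sq: "(pos_sq has_real_derivative 2 * max 0 x) (at x)"
proof (cases "x = 0")
  case True
  have "((\<lambda>y. (pos_sq y - pos_sq 0) / (y - 0)) \<longlongrightarrow> 0) (at 0)"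
  proof (rule tendsto_sandwich[where f="\<lambda>y. - \<bar>y\<bar>" and h="\<lambda>y. \<bar>y\<bar>"])
    show "\<forall>\<^sub>F y in at 0. - \<bar>y\<bar> \<le> (pos_sq y - pos_sq 0) / (y - 0)"
      and "\<forall>\<^sub>F y in at 0. (pos_sq y - pos_sq 0) / (y - 0) \<le> \<bar>y\<bar>"
      by (auto simp: pos_sq_def max_def power2_eq_square intro!: always_eventually)
  qed (auto intro!: tendsto_eq_intros)
  then show ?thesis using True by (simp add: has_field_derivative_iff)
next
  case False
  define g where "g = (if x > 0 then (\<lambda>y::real. y\<^sup>2) else (\<lambda>y. 0))"
  have "\<forall>\<^sub>F y in nhds x. y \<in> (if x > 0 then {0<..} else {..<0})"
    using False by (intro eventually_nhds_in_open) auto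
  then have "\<forall>\<^sub>F y in nhds x. pos_sq y = g y"
    by (rule eventually_mono) (auto simp: pos_sq_def g_def split: if_splits)
  moreover have "(g has_real_derivative 2 * max 0 x) (at x)"
    using False by (cases "x > 0") (auto simp: g_def intro!: derivative_eq_intros)
  ultimately show ?thesis
    by (subst DERIV_cong_ev[of x x pos_sq g]) auto
qed

text \<open>A \<open>C\<^sup>1\<close> step from \<open>0\<close> (for \<open>t \<le> 0\<close>) to \<open>1\<close> (for \<open>t \<ge> 1\<close>), made of two parabolic arcs.\<close>
definition smooth_step :: "real \<Rightarrow> real" where
  "smooth_step t = 2 * pos_sq t - 4 * pos_sq (t - 1/2) + 2 * pos_sq (t - 1)"

definition smooth_step_deriv :: "real \<Rightarrow> real" where
  "smooth_step_deriv t = 4 * max 0 t - 8 * max 0 (t - 1/2) + 4 * max 0 (t - 1)"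

lemma has_real_derivative_smooth_step:
  "(smooth_step has_real_derivative smooth_step_deriv x) (at x)"
  unfolding smooth_step_def smooth_step_deriv_def
  by (auto intro!: derivative_eq_intros DERIV_chain2[OF has_real_derivative_pos_sq])

lemma isCont_smooth_step: "isCont smooth_step x"
  using has_real_derivative_smooth_step by (rule DERIV_isCont)

lemma isCont_smooth_step_deriv: "isCont smooth_step_deriv x"
  unfolding smooth_step_deriv_def by (intro continuous_intros)

lemma smooth_step_nonpos: "t \<le> 0 \<Longrightarrow> smooth_step t = 0"
  by (simp add: smooth_step_def pos_sq_def max_def)

lemma smooth_step_ge_one: "t \<ge> 1 \<Longrightarrow> smooth_step t = 1"
  by (simp add: smooth_step_def pos_sq_def max_def power2_eq_square algebra_simps)

lemma smooth_step_bounds: "0 \<le> smooth_step t \<and> smooth_step t \<le> 1"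
proof -
  consider "t \<le> 0" | "0 \<le> t \<and> t \<le> 1/2" | "1/2 \<le> t \<and> t \<le> 1" | "1 \<le> t" by linarith
  then show ?thesis
  proof cases
    case 2
    then have "smooth_step t = 2 * t\<^sup>2" by (simp add: smooth_step_def pos_sq_def max_def)
    moreover have "t\<^sup>2 \<le> (1/2)\<^sup>2" using 2 by (intro power_mono) auto
    ultimately show ?thesis by (simp add: power2_eq_square)
  next
    case 3
    then have "smooth_step t = 1 - 2 * (1 - t)\<^sup>2"
      by (simp add: smooth_step_def pos_sq_def max_def power2_eq_square algebra_simps)
    moreover have "(1 - t)\<^sup>2 \<le> (1/2)\<^sup>2" using 3 by (intro power_mono) auto
    ultimately show ?thesis by (simp add: power2_eq_square)
  qed (auto simp: smooth_step_nonpos smooth_step_ge_one)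
qed

lemma smooth_step_measurable [measurable]: "smooth_step \<in> borel_measurable borel"
  unfolding smooth_step_def pos_sq_def by measurable

text \<open>Equal to \<open>1\<close> on \<open>[a + 1/n, b - 1/n]\<close> and to \<open>0\<close> outside \<open>[a, b]\<close>.\<close>
definition bump :: "real \<Rightarrow> real \<Rightarrow> real \<Rightarrow> real \<Rightarrow> real" where
  "bump a b n x = smooth_step (n * (x - a)) * smooth_step (n * (b - x))"

lemma bump_measurable [measurable]: "bump a b n \<in> borel_measurable borel"
  unfolding bump_def by measurable

lemma has_real_derivative_bump:
  "(bump a b n has_real_derivative n * smooth_step_deriv (n * (x - a)) * smooth_step (n * (b - x))
    - smooth_step (n * (x - a)) * (n * smooth_step_deriv (n * (b - x)))) (at x)"
  unfolding bump_def
  by (auto intro!: derivative_eq_intros DERIV_chain2[OF has_real_derivative_smooth_step])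

lemma deriv_bump: "deriv (bump a b n) = (\<lambda>x. n * smooth_step_deriv (n * (x - a)) * smooth_step (n * (b - x))
    - smooth_step (n * (x - a)) * (n * smooth_step_deriv (n * (b - x))))"
  using has_real_derivative_bump DERIV_imp_deriv by blast

lemma bump_outside: "0 \<le> n \<Longrightarrow> x \<notin> {a..b} \<Longrightarrow> bump a b n x = 0"
  by (auto simp: bump_def smooth_step_nonpos mult_le_0_iff)

lemma test_fun_bump: "0 < n \<Longrightarrow> test_fun (bump a b n)"
  unfolding test_fun_def
proof (intro conjI allI exI impI)
  show "continuous_on UNIV (deriv (bump a b n))"
    unfolding deriv_bump
    by (intro continuous_at_imp_continuous_on ballI continuous_intros
        isCont_o2[OF _ isCont_smooth_step_deriv] isCont_o2[OF _ isCont_smooth_step])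
  show "bump a b n x = 0" if "0 < n" and "\<bar>a\<bar> + \<bar>b\<bar> < \<bar>x\<bar>" for x
    using that by (intro bump_outside) auto
qed (use has_real_derivative_bump real_differentiable_def in blast)

lemma abs_bump_le_indicator: "0 \<le> n \<Longrightarrow> \<bar>bump a b n x\<bar> \<le> indicator {a..b} x"
proof (cases "x \<in> {a..b}")
  case True
  then show ?thesis
    using smooth_step_bounds[of "n * (x - a)"] smooth_step_bounds[of "n * (b - x)"]
    by (auto simp: bump_def intro: mult_le_one)
qed (simp add: bump_outside)

lemma bump_tendsto_indicator:
  "(\<lambda>k. bump a b (real (Suc k)) x) \<longlonglongrightarrow> indicator {a<..<b} x"
proof (rule tendsto_eventually)
  show "\<forall>\<^sub>F k in sequentially. bump a b (real (Suc k)) x = indicator {a<..<b} x"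
  proof (cases "a < x \<and> x < b")
    case True
    have "\<forall>\<^sub>F k in sequentially. 1 / (b - x) + 1 / (x - a) \<le> real (Suc k)"
      using filterlim_compose[OF filterlim_real_sequentially filterlim_Suc]
      by (simp add: filterlim_at_top o_def)
    then show ?thesis
    proof (rule eventually_mono)
      fix k assume k: "1 / (b - x) + 1 / (x - a) \<le> real (Suc k)"
      with True have "1 / (b - x) \<le> real (Suc k)" "1 / (x - a) \<le> real (Suc k)"
        by (smt (verit) divide_pos_pos)+
      with True have "1 \<le> real (Suc k) * (b - x)" "1 \<le> real (Suc k) * (x - a)"
        by (simp_all add: pos_divide_le_eq mult.commute)
      with True show "bump a b (real (Suc k)) x = indicator {a<..<b} x"
        by (simp add: bump_def smooth_step_ge_one)
    qed
  next
    case False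
    have "bump a b (real (Suc k)) x = 0" for k
    proof (cases "x \<in> {a..b}")
      case True
      with False have "x = a \<or> x = b" by auto
      then show ?thesis by (auto simp: bump_def smooth_step_nonpos)
    qed (simp add: bump_outside)
    with False show ?thesis by (auto intro: always_eventually)
  qed
qed


lemma L2_borel_measurable [measurable_dest]: "L2 f \<Longrightarrow> f \<in> borel_measurable borel"
  by (simp add: L2_def)

lemma L2_integrable_sq: "L2 f \<Longrightarrow> integrable lborel (\<lambda>x. (f x)\<^sup>2)"
  by (simp add: L2_def)

lemma abs_mult_le_sq_avg: "\<bar>a * b\<bar> \<le> (a\<^sup>2 + b\<^sup>2) / (2::real)"
proof -
  have "0 \<le> (\<bar>a\<bar> - \<bar>b\<bar>)\<^sup>2" by simp
  then show ?thesis by (simp add: power2_diff abs_mult power2_abs)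
qed

lemma integrable_mult_L2:
  assumes "L2 f" "L2 g"
  shows "integrable lborel (\<lambda>x. f x * g x)"
proof (rule Bochner_Integration.integrable_bound)
  show "integrable lborel (\<lambda>x. ((f x)\<^sup>2 + (g x)\<^sup>2) / 2)"
    using assms by (auto simp: L2_def)
  show "AE x in lborel. norm (f x * g x) \<le> norm (((f x)\<^sup>2 + (g x)\<^sup>2) / 2)"
    using abs_mult_le_sq_avg by (auto intro!: always_eventually order.trans[OF _ abs_ge_self])
qed (use assms in measurable)

lemma L2_diff:
  assumes "L2 f" "L2 g"
  shows "L2 (\<lambda>x. f x - g x)"
proof -
  have [measurable]: "f \<in> borel_measurable borel" "g \<in> borel_measurable borel"
    using assms by (auto intro: L2_borel_measurable)
  have "integrable lborel (\<lambda>x. (f x)\<^sup>2 + (g x)\<^sup>2 - 2 * (f x * g x))"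
    using assms integrable_mult_L2[OF assms] by (auto simp: L2_def)
  then show ?thesis
    using assms unfolding L2_def by (simp add: power2_diff algebra_simps)
qed

lemma lborel_integral_shift:
  fixes f :: "real \<Rightarrow> real"
  shows "(\<integral>x. f (x + s) \<partial>lborel) = (\<integral>x. f x \<partial>lborel)"
  using lborel_integral_real_affine[of 1 f s] by (simp add: add.commute)

lemma lborel_nn_integral_shift:
  fixes f :: "real \<Rightarrow> ennreal"
  shows "f \<in> borel_measurable borel \<Longrightarrow> (\<integral>\<^sup>+x. f (x + s) \<partial>lborel) = (\<integral>\<^sup>+x. f x \<partial>lborel)"
  using nn_integral_real_affine[of f 1 s] by (simp add: add.commute)

lemma L2_shift:
  assumes "L2 f"
  shows "L2 (\<lambda>x. f (x + s))"
proof -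
  have [measurable]: "f \<in> borel_measurable borel" using assms by (rule L2_borel_measurable)
  have "integrable lborel (\<lambda>x. (f (s + 1 * x))\<^sup>2)"
    using assms by (intro lborel_integrable_real_affine) (auto simp: L2_def)
  then show ?thesis
    using assms unfolding L2_def by (simp add: add.commute)
qed

lemma L2_indicator_Icc: "L2 (indicator {a..b} :: real \<Rightarrow> real)"
proof -
  have "(\<lambda>x. (indicator {a..b} x :: real)\<^sup>2) = indicator {a..b}"
    by (auto simp: fun_eq_iff indicator_def)
  then show ?thesis
    unfolding L2_def by (simp add: integrable_real_indicator emeasure_lborel_Icc_eq)
qed

lemma integrable_vanishing_outside_interval:
  fixes g :: "real \<Rightarrow> real"
  assumes "continuous_on UNIV g" "\<And>x. R < \<bar>x\<bar> \<Longrightarrow> g x = 0"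
  shows "integrable lborel g"
proof -
  have "integrable lborel (\<lambda>x. indicator (cball 0 R) x *\<^sub>R g x)"
    by (rule borel_integrable_compact) (auto intro: continuous_on_subset[OF assms(1)])
  moreover have "(\<lambda>x. indicator (cball 0 R) x *\<^sub>R g x) = g"
    using assms(2) by (auto simp: fun_eq_iff indicator_def dist_real_def)
  ultimately show ?thesis by simp
qed

lemma test_fun_has_real_derivative:
  "test_fun \<phi> \<Longrightarrow> (\<phi> has_real_derivative deriv \<phi> x) (at x)"
  unfolding test_fun_def using DERIV_deriv_iff_real_differentiable by blast

lemma test_fun_continuous_deriv: "test_fun \<phi> \<Longrightarrow> continuous_on UNIV (deriv \<phi>)"
  by (simp add: test_fun_def)

lemma test_fun_continuous: "test_fun \<phi> \<Longrightarrow> continuous_on UNIV \<phi>"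
  by (intro continuous_at_imp_continuous_on ballI DERIV_isCont[OF test_fun_has_real_derivative])

lemma test_fun_borel_measurable:
  "test_fun \<phi> \<Longrightarrow> \<phi> \<in> borel_measurable borel"
  "test_fun \<phi> \<Longrightarrow> deriv \<phi> \<in> borel_measurable borel"
  by (auto intro: borel_measurable_continuous_onI test_fun_continuous test_fun_continuous_deriv)

lemma test_fun_vanishes_outside_interval:
  assumes "test_fun \<phi>"
  obtains R where "\<And>x. R < \<bar>x\<bar> \<Longrightarrow> \<phi> x = 0 \<and> deriv \<phi> x = 0"
proof -
  obtain R where R: "\<And>x. R < \<bar>x\<bar> \<Longrightarrow> \<phi> x = 0" using assms unfolding test_fun_def by blast
  have "deriv \<phi> x = 0" if x: "R < \<bar>x\<bar>" for x
  proof -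
    have "open {y::real. R < \<bar>y\<bar>}" by (intro open_Collect_less continuous_intros)
    then have "\<forall>\<^sub>F y in nhds x. y \<in> {y. R < \<bar>y\<bar>}" using x by (intro eventually_nhds_in_open) auto
    then have "\<forall>\<^sub>F y in nhds x. \<phi> y = 0" by (rule eventually_mono) (auto intro: R)
    then have "(\<phi> has_real_derivative 0) (at x)"
      using DERIV_cong_ev[of x x \<phi> "\<lambda>y. 0" 0 0] by simp
    then show ?thesis by (rule DERIV_imp_deriv)
  qed
  with R that show ?thesis by blast
qed

lemma test_fun_L2:
  assumes "test_fun \<phi>"
  shows "L2 \<phi>" "L2 (deriv \<phi>)"
proof -
  obtain R where R: "\<And>x. R < \<bar>x\<bar> \<Longrightarrow> \<phi> x = 0 \<and> deriv \<phi> x = 0"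
    using test_fun_vanishes_outside_interval[OF assms] by blast
  note cont = test_fun_continuous[OF assms] test_fun_continuous_deriv[OF assms]
  have "integrable lborel (\<lambda>x. (\<phi> x)\<^sup>2)" "integrable lborel (\<lambda>x. (deriv \<phi> x)\<^sup>2)"
    by (rule integrable_vanishing_outside_interval[where R=R];
        auto intro!: continuous_intros cont simp: R)+
  then show "L2 \<phi>" "L2 (deriv \<phi>)"
    using test_fun_borel_measurable[OF assms] by (simp_all add: L2_def)
qed

lemma test_fun_shift:
  assumes "test_fun \<phi>"
  shows "test_fun (\<lambda>x. \<phi> (x - t))" and "deriv (\<lambda>x. \<phi> (x - t)) = (\<lambda>x. deriv \<phi> (x - t))"
proof -
  have "((\<lambda>x. x - t) has_real_derivative 1) (at x)" for x
    by (auto intro!: derivative_eq_intros)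
  from DERIV_chain2[OF test_fun_has_real_derivative[OF assms] this]
  have d: "((\<lambda>x. \<phi> (x - t)) has_real_derivative deriv \<phi> (x - t)) (at x)" for x
    by simp
  then show deriv_eq: "deriv (\<lambda>x. \<phi> (x - t)) = (\<lambda>x. deriv \<phi> (x - t))"
    using DERIV_imp_deriv by blast
  obtain R where R: "\<And>x. R < \<bar>x\<bar> \<Longrightarrow> \<phi> x = 0" using assms unfolding test_fun_def by blast
  show "test_fun (\<lambda>x. \<phi> (x - t))"
    unfolding test_fun_def deriv_eq
  proof (intro conjI)
    show "\<forall>x. (\<lambda>x. \<phi> (x - t)) differentiable at x" using d real_differentiable_def by blast
    show "continuous_on UNIV (\<lambda>x. deriv \<phi> (x - t))"
      by (rule continuous_on_compose2[OF test_fun_continuous_deriv[OF assms]])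
        (auto intro!: continuous_intros)
    show "\<exists>R. \<forall>x. R < \<bar>x\<bar> \<longrightarrow> \<phi> (x - t) = 0"
      by (rule exI[of _ "R + \<bar>t\<bar>"]) (auto intro!: R)
  qed
qed


section \<open>The fundamental lemma of the calculus of variations\<close>

lemma AE_zero_if_integral_Ioi_zero:
  fixes g :: "real \<Rightarrow> real"
  assumes g: "integrable lborel g"
    and zero: "\<And>x. (\<integral>y. g y * indicator {x<..} y \<partial>lborel) = 0"
  shows "AE x in lborel. g x = 0"
proof -
  have [measurable]: "g \<in> borel_measurable borel" using g by auto
  have tail: "(\<integral>\<^sup>+y. ennreal (g y) * indicator {x<..} y \<partial>lborel)
      = (\<integral>\<^sup>+y. ennreal (- g y) * indicator {x<..} y \<partial>lborel)
    \<and> (\<integral>\<^sup>+y. ennreal (- g y) * indicator {x<..} y \<partial>lborel) < \<infinity>" for x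
  proof -
    have "integrable lborel (\<lambda>y. indicator {x<..} y *\<^sub>R g y)"
      using g by (intro integrable_mult_indicator) auto
    then obtain p q where pq: "0 \<le> p" "0 \<le> q"
      "(\<integral>\<^sup>+y. ennreal (g y * indicator {x<..} y) \<partial>lborel) = ennreal p"
      "(\<integral>\<^sup>+y. ennreal (- (g y * indicator {x<..} y)) \<partial>lborel) = ennreal q"
      "(\<integral>y. g y * indicator {x<..} y \<partial>lborel) = p - q"
      by (auto simp: mult.commute elim: integrableE)
    have "ennreal (c * indicator {x<..} y) = ennreal c * indicator {x<..} y"
      and "ennreal (- (c * indicator {x<..} y)) = ennreal (- c) * indicator {x<..} y" for c y
      by (simp_all add: indicator_def)
    with pq zero[of x] show ?thesis by simp
  qed
  have "density lborel (\<lambda>y. ennreal (g y)) = density lborel (\<lambda>y. ennreal (- g y))"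
  proof (rule measure_eqI_lessThan)
    fix x
    show "emeasure (density lborel (\<lambda>y. ennreal (g y))) {x<..}
        = emeasure (density lborel (\<lambda>y. ennreal (- g y))) {x<..}"
      and "emeasure (density lborel (\<lambda>y. ennreal (g y))) {x<..} < \<infinity>"
      using tail[of x] by (simp_all add: emeasure_density)
  qed simp_all
  then have "AE y in lborel. ennreal (g y) = ennreal (- g y)"
    using g by (subst (asm) finite_density_unique) auto
  moreover have "ennreal t = ennreal (- t) \<Longrightarrow> t = 0" for t :: real
    by (cases "0 < t"; cases "t < 0") (auto simp: ennreal_neg)
  ultimately show ?thesis by (auto elim: eventually_mono)
qed

lemma integral_Ioo_zero_if_orthogonal_to_test_funs:
  fixes h :: "real \<Rightarrow> real"
  assumes [measurable]: "h \<in> borel_measurable borel"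
    and loc_int: "\<And>a b. integrable lborel (\<lambda>x. h x * indicator {a..b} x)"
    and orth: "\<And>\<phi>. test_fun \<phi> \<Longrightarrow> (\<integral>x. h x * \<phi> x \<partial>lborel) = 0"
  shows "(\<integral>x. h x * indicator {a<..<b} x \<partial>lborel) = 0"
proof -
  let ?s = "\<lambda>k x. h x * bump a b (real (Suc k)) x"
  have "(\<lambda>k. \<integral>x. ?s k x \<partial>lborel) \<longlonglongrightarrow> (\<integral>x. h x * indicator {a<..<b} x \<partial>lborel)"
  proof (rule integral_dominated_convergence)
    show "integrable lborel (\<lambda>x. \<bar>h x * indicator {a..b} x\<bar>)"
      using loc_int by (rule integrable_abs)
    show "AE x in lborel. norm (?s k x) \<le> \<bar>h x * indicator {a..b} x\<bar>" for k
      using abs_bump_le_indicator[of "real (Suc k)" a b]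
      by (auto simp: abs_mult intro!: always_eventually mult_left_mono)
    show "AE x in lborel. (\<lambda>k. ?s k x) \<longlonglongrightarrow> h x * indicator {a<..<b} x"
      by (intro always_eventually allI tendsto_mult tendsto_const bump_tendsto_indicator)
  qed measurable
  moreover have "(\<lambda>k. \<integral>x. ?s k x \<partial>lborel) = (\<lambda>k. 0)"
    using orth test_fun_bump by simp
  ultimately show ?thesis using LIMSEQ_unique tendsto_const by metis
qed

text \<open>Truncating \<open>h\<close> to \<open>(-N, N)\<close> makes it integrable, and the vanishing of its integrals over
  open intervals then yields the vanishing of its integrals over all half-lines.\<close>
lemma AE_zero_if_orthogonal_to_test_funs:
  fixes h :: "real \<Rightarrow> real"
  assumes [measurable]: "h \<in> borel_measurable borel"
    and loc_int: "\<And>a b. integrable lborel (\<lambda>x. h x * indicator {a..b} x)"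
    and orth: "\<And>\<phi>. test_fun \<phi> \<Longrightarrow> (\<integral>x. h x * \<phi> x \<partial>lborel) = 0"
  shows "AE x in lborel. h x = 0"
proof -
  note interval = integral_Ioo_zero_if_orthogonal_to_test_funs[OF assms]
  define hN where "hN N x = h x * indicator {- real N<..<real N} x" for N :: nat and x
  have "AE x in lborel. hN N x = 0" for N
  proof (rule AE_zero_if_integral_Ioi_zero)
    have "integrable lborel
        (\<lambda>x. indicator {- real N<..<real N} x *\<^sub>R (h x * indicator {- real N..real N} x))"
      by (intro integrable_mult_indicator loc_int) auto
    moreover have "(\<lambda>x. indicator {- real N<..<real N} x *\<^sub>R (h x * indicator {- real N..real N} x))
        = hN N"
      by (auto simp: fun_eq_iff hN_def indicator_def)
    ultimately show "integrable lborel (hN N)" by simp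
    have "hN N y * indicator {x<..} y = h y * indicator {max x (- real N)<..<real N} y" for x y
      by (auto simp: hN_def indicator_def)
    then show "(\<integral>y. hN N y * indicator {x<..} y \<partial>lborel) = 0" for x
      by (simp add: interval)
  qed
  then have "AE x in lborel. \<forall>N. hN N x = 0" by (simp add: AE_all_countable)
  then show ?thesis
  proof eventually_elim
    fix x assume "\<forall>N. hN N x = 0"
    moreover obtain N :: nat where "\<bar>x\<bar> < real N" using reals_Archimedean2 by blast
    ultimately have "hN N x = 0" "\<bar>x\<bar> < real N" by auto
    then show "h x = 0" by (auto simp: hN_def indicator_def abs_less_iff)
  qed
qed


section \<open>Translates of an \<open>H\<^sup>1\<close> function\<close>

lemma integrable_pair_L2_shift:
  fixes f g :: "real \<Rightarrow> real"
  assumes f: "L2 f" and g: "L2 g" and y: "y \<ge> 0"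
  shows "integrable (lborel \<Otimes>\<^sub>M lborel)
    (\<lambda>p. f (fst p) * (indicator {0..y} (snd p) * g (fst p + c * snd p)))"
proof -
  have [measurable]: "f \<in> borel_measurable borel" "g \<in> borel_measurable borel"
    using f g by (auto intro: L2_borel_measurable)
  define K where "K = ((\<integral>x. (f x)\<^sup>2 \<partial>lborel) + (\<integral>x. (g x)\<^sup>2 \<partial>lborel)) / 2"
  let ?H = "\<lambda>p. ennreal (indicator {0..y} (snd p) * (((f (fst p))\<^sup>2 + (g (fst p + c * snd p))\<^sup>2) / 2))"
  have inner: "(\<integral>\<^sup>+x. ?H (x, t) \<partial>lborel) = ennreal K * indicator {0..y} t" for t
  proof -
    have fi: "integrable lborel (\<lambda>x. (f x)\<^sup>2)" and gi: "integrable lborel (\<lambda>x. (g (x + c * t))\<^sup>2)"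
      using f L2_shift[OF g] by (auto simp: L2_def)
    then have "(\<integral>\<^sup>+x. ?H (x, t) \<partial>lborel)
        = ennreal (indicator {0..y} t * (((\<integral>x. (f x)\<^sup>2 \<partial>lborel) + (\<integral>x. (g (x + c * t))\<^sup>2 \<partial>lborel)) / 2))"
      by (subst nn_integral_eq_integral) auto
    then show ?thesis
      unfolding K_def lborel_integral_shift[of "\<lambda>x. (g x)\<^sup>2" "c * t"]
      by (cases "t \<in> {0..y}") simp_all
  qed
  have "(\<integral>\<^sup>+p. ?H p \<partial>(lborel \<Otimes>\<^sub>M lborel)) = (\<integral>\<^sup>+t. (\<integral>\<^sup>+x. ?H (x, t) \<partial>lborel) \<partial>lborel)"
    by (rule lborel_pair.nn_integral_snd[symmetric]) measurable
  also have "\<dots> = ennreal K * emeasure lborel {0..y}"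
    by (simp only: inner) (simp add: nn_integral_cmult_indicator)
  also have "\<dots> < \<infinity>" using y by (simp add: ennreal_mult_less_top)
  finally have fin: "(\<integral>\<^sup>+p. ?H p \<partial>(lborel \<Otimes>\<^sub>M lborel)) < \<infinity>" .
  show ?thesis
    unfolding integrable_iff_bounded
  proof (intro conjI le_less_trans[OF nn_integral_mono fin])
    fix p :: "real \<times> real"
    show "ennreal (norm (f (fst p) * (indicator {0..y} (snd p) * g (fst p + c * snd p)))) \<le> ?H p"
      using abs_mult_le_sq_avg[of "f (fst p)" "g (fst p + c * snd p)"]
      by (intro ennreal_leI) (auto simp: indicator_def abs_mult)
  qed measurable
qed

lemma integral_deriv_test_fun_Icc:
  assumes "test_fun \<phi>" and "y \<ge> 0"
  shows "(\<integral>t. indicator {0..y} t * deriv \<phi> (x - t) \<partial>lborel) = \<phi> x - \<phi> (x - y)"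
proof -
  have "(\<integral>t. (- deriv \<phi> (x - t)) * indicator {0..y} t \<partial>lborel) = \<phi> (x - y) - \<phi> (x - 0)"
  proof (rule integral_FTC_Icc_real[where F="\<lambda>t. \<phi> (x - t)", OF \<open>y \<ge> 0\<close>])
    fix t
    have "((\<lambda>t. x - t) has_real_derivative -1) (at t)" by (auto intro!: derivative_eq_intros)
    from DERIV_chain2[OF test_fun_has_real_derivative[OF assms(1)] this]
    show "((\<lambda>t. \<phi> (x - t)) has_real_derivative - deriv \<phi> (x - t)) (at t)" by simp
    have "isCont (deriv \<phi>) (x - t)"
      using test_fun_continuous_deriv[OF assms(1)] by (simp add: continuous_on_eq_continuous_at)
    with isCont_o2[where f="\<lambda>t. x - t" and a=t] have "isCont (\<lambda>t. deriv \<phi> (x - t)) t" by simp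
    then show "isCont (\<lambda>t. - deriv \<phi> (x - t)) t" by (rule isCont_minus)
  qed
  then show ?thesis by (simp add: mult.commute)
qed

definition forward_integral :: "(real \<Rightarrow> real) \<Rightarrow> real \<Rightarrow> real \<Rightarrow> real" where
  "forward_integral v y x = (\<integral>t. indicator {0..y} t * v (x + t) \<partial>lborel)"

lemma borel_measurable_forward_integral [measurable]:
  assumes [measurable]: "v \<in> borel_measurable borel"
  shows "forward_integral v y \<in> borel_measurable borel"
proof -
  have "forward_integral v y \<in> borel_measurable lborel"
    unfolding forward_integral_def by measurable
  then show ?thesis by simp
qed

lemma integrable_mult_forward_integral:
  assumes "L2 f" "L2 v" "y \<ge> 0"
  shows "integrable lborel (\<lambda>x. f x * forward_integral v y x)"
  using lborel_pair.integrable_fst'[OF integrable_pair_L2_shift[OF assms, of 1]]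
  by (simp add: forward_integral_def)

lemma integral_shift_diff_mult_test_fun:
  assumes u: "L2 u" and \<phi>: "test_fun \<phi>" and y: "y \<ge> 0"
  shows "(\<integral>x. (u (x + y) - u x) * \<phi> x \<partial>lborel)
    = - (\<integral>x. (\<integral>t. u x * (indicator {0..y} t * deriv \<phi> (x - t)) \<partial>lborel) \<partial>lborel)"
proof -
  have i1: "integrable lborel (\<lambda>x. u (x + y) * \<phi> x)"
    and i2: "integrable lborel (\<lambda>x. u x * \<phi> x)"
    and i3: "integrable lborel (\<lambda>x. u x * \<phi> (x - y))"
    using integrable_mult_L2[OF L2_shift[OF u] test_fun_L2(1)[OF \<phi>]]
      integrable_mult_L2[OF u test_fun_L2(1)[OF \<phi>]]
      integrable_mult_L2[OF u L2_shift[OF test_fun_L2(1)[OF \<phi>], of "-y"]]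
    by simp_all
  have "(\<integral>x. (u (x + y) - u x) * \<phi> x \<partial>lborel)
      = (\<integral>x. u (x + y) * \<phi> x \<partial>lborel) - (\<integral>x. u x * \<phi> x \<partial>lborel)"
    using i1 i2 by (simp add: left_diff_distrib)
  also have "(\<integral>x. u (x + y) * \<phi> x \<partial>lborel) = (\<integral>x. u x * \<phi> (x - y) \<partial>lborel)"
    using lborel_integral_shift[of "\<lambda>x. u x * \<phi> (x - y)" y] by simp
  also have "\<dots> - (\<integral>x. u x * \<phi> x \<partial>lborel) = (\<integral>x. - (u x * (\<phi> x - \<phi> (x - y))) \<partial>lborel)"
    using i2 i3 by (simp add: right_diff_distrib)
  also have "\<dots> = - (\<integral>x. (\<integral>t. u x * (indicator {0..y} t * deriv \<phi> (x - t)) \<partial>lborel) \<partial>lborel)"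
    by (simp add: integral_deriv_test_fun_Icc[OF \<phi> y])
  finally show ?thesis .
qed

lemma weak_deriv_shifted_test_fun:
  assumes "weak_deriv u v" and "test_fun \<phi>"
  shows "(\<integral>x. u x * deriv \<phi> (x - t) \<partial>lborel) = - (\<integral>x. \<phi> x * v (x + t) \<partial>lborel)"
proof -
  have "(\<integral>x. u x * deriv \<phi> (x - t) \<partial>lborel) = - (\<integral>x. v x * \<phi> (x - t) \<partial>lborel)"
    using assms test_fun_shift[OF assms(2), of t] unfolding weak_deriv_def by metis
  also have "(\<integral>x. v x * \<phi> (x - t) \<partial>lborel) = (\<integral>x. \<phi> x * v (x + t) \<partial>lborel)"
    using lborel_integral_shift[of "\<lambda>x. v x * \<phi> (x - t)" t] by (simp add: mult.commute)
  finally show ?thesis .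
qed

text \<open>Weakly, \<open>u(x + y) - u(x) = \<integral>\<^sub>x\<^sup>x\<^sup>+\<^sup>y v\<close>: swap the order of integration and use the definition of
  the weak derivative once for each translate of the test function.\<close>
lemma H1_shift_diff_pairing:
  assumes H: "H1_with_deriv u v" and \<phi>: "test_fun \<phi>" and y: "y \<ge> 0"
  shows "(\<integral>x. (u (x + y) - u x) * \<phi> x \<partial>lborel) = (\<integral>x. \<phi> x * forward_integral v y x \<partial>lborel)"
proof -
  have u: "L2 u" and v: "L2 v" and wd: "weak_deriv u v" using H by (auto simp: H1_with_deriv_def)
  note L2\<phi> = test_fun_L2[OF \<phi>]
  have "integrable (lborel \<Otimes>\<^sub>M lborel) (\<lambda>(x, t). u x * (indicator {0..y} t * deriv \<phi> (x - t)))"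
    using integrable_pair_L2_shift[OF u L2\<phi>(2) y, of "-1"] by (simp add: case_prod_beta')
  from lborel_pair.Fubini_integral[OF this]
  have "(\<integral>x. (\<integral>t. u x * (indicator {0..y} t * deriv \<phi> (x - t)) \<partial>lborel) \<partial>lborel)
      = (\<integral>t. (\<integral>x. u x * (indicator {0..y} t * deriv \<phi> (x - t)) \<partial>lborel) \<partial>lborel)" ..
  also have "\<dots> = - (\<integral>t. (\<integral>x. \<phi> x * (indicator {0..y} t * v (x + t)) \<partial>lborel) \<partial>lborel)"
    by (simp add: mult.left_commute[of _ "indicator _ _"] weak_deriv_shifted_test_fun[OF wd \<phi>])
  also have "integrable (lborel \<Otimes>\<^sub>M lborel) (\<lambda>(x, t). \<phi> x * (indicator {0..y} t * v (x + t)))"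
    using integrable_pair_L2_shift[OF L2\<phi>(1) v y, of 1] by (simp add: case_prod_beta')
  note lborel_pair.Fubini_integral[OF this]
  finally show ?thesis
    by (simp add: integral_shift_diff_mult_test_fun[OF u \<phi> y] forward_integral_def)
qed


lemma forward_integral_sq_le:
  assumes v: "L2 v" and y: "y \<ge> 0"
  shows "ennreal ((forward_integral v y x)\<^sup>2)
    \<le> ennreal y * (\<integral>\<^sup>+t. ennreal (indicator {0..y} t * (v (x + t))\<^sup>2) \<partial>lborel)"
proof (cases "integrable lborel (\<lambda>t. indicator {0..y} t * v (x + t))")
  case False
  then show ?thesis by (simp add: forward_integral_def not_integrable_integral_eq)
next
  case True
  have [measurable]: "v \<in> borel_measurable borel" using v by (auto intro: L2_borel_measurable)
  let ?f = "\<lambda>t. ennreal (indicator {0..y} t)"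
  let ?g = "\<lambda>t. ennreal (indicator {0..y} t * \<bar>v (x + t)\<bar>)"
  have "ennreal \<bar>forward_integral v y x\<bar>
      \<le> (\<integral>\<^sup>+t. ennreal (norm (indicator {0..y} t * v (x + t))) \<partial>lborel)"
    unfolding forward_integral_def using integral_norm_bound_ennreal[OF True] by simp
  also have "\<dots> = (\<integral>\<^sup>+t. ?f t * ?g t \<partial>lborel)"
    by (intro nn_integral_cong) (auto simp: indicator_def abs_mult)
  finally have bound: "ennreal \<bar>forward_integral v y x\<bar> \<le> (\<integral>\<^sup>+t. ?f t * ?g t \<partial>lborel)" .
  have "ennreal ((forward_integral v y x)\<^sup>2) = (ennreal \<bar>forward_integral v y x\<bar>)\<^sup>2"
    by (subst ennreal_power) (simp_all add: power2_abs)
  also have "\<dots> \<le> (\<integral>\<^sup>+t. ?f t * ?g t \<partial>lborel)\<^sup>2"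
    using bound by (intro power_mono) auto
  also have "\<dots> \<le> (\<integral>\<^sup>+t. ?f t ^ 2 \<partial>lborel) * (\<integral>\<^sup>+t. ?g t ^ 2 \<partial>lborel)"
    by (rule Cauchy_Schwarz_nn_integral) measurable
  also have "(\<integral>\<^sup>+t. ?f t ^ 2 \<partial>lborel) = (\<integral>\<^sup>+t. indicator {0..y} t \<partial>lborel)"
    by (intro nn_integral_cong) (simp add: indicator_def)
  also have "\<dots> = ennreal y" using y by simp
  also have "(\<integral>\<^sup>+t. ?g t ^ 2 \<partial>lborel) = (\<integral>\<^sup>+t. ennreal (indicator {0..y} t * (v (x + t))\<^sup>2) \<partial>lborel)"
    by (intro nn_integral_cong) (simp add: ennreal_power indicator_def power2_abs)
  finally show ?thesis .
qed

lemma nn_integral_forward_integral_sq_le: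
  assumes v: "L2 v" and y: "y \<ge> 0"
  shows "(\<integral>\<^sup>+x. ennreal ((forward_integral v y x)\<^sup>2) \<partial>lborel) \<le> ennreal (y\<^sup>2 * (\<integral>x. (v x)\<^sup>2 \<partial>lborel))"
proof -
  have [measurable]: "v \<in> borel_measurable borel" using v by (auto intro: L2_borel_measurable)
  define V where "V = (\<integral>x. (v x)\<^sup>2 \<partial>lborel)"
  have V0: "V \<ge> 0" unfolding V_def by (intro integral_nonneg_AE) auto
  have "(\<lambda>x. ennreal ((v x)\<^sup>2)) \<in> borel_measurable borel" by measurable
  note shift = lborel_nn_integral_shift[OF this]
  have V: "(\<integral>\<^sup>+x. ennreal ((v (x + t))\<^sup>2) \<partial>lborel) = ennreal V" for t
    unfolding V_def shift
    by (rule nn_integral_eq_integral[OF L2_integrable_sq[OF v]]) auto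
  have "(\<integral>\<^sup>+x. ennreal ((forward_integral v y x)\<^sup>2) \<partial>lborel)
      \<le> (\<integral>\<^sup>+x. ennreal y * (\<integral>\<^sup>+t. ennreal (indicator {0..y} t * (v (x + t))\<^sup>2) \<partial>lborel) \<partial>lborel)"
    by (intro nn_integral_mono forward_integral_sq_le[OF v y])
  also have "\<dots> = ennreal y * (\<integral>\<^sup>+t. (\<integral>\<^sup>+x. ennreal (indicator {0..y} t * (v (x + t))\<^sup>2) \<partial>lborel) \<partial>lborel)"
    using lborel_pair.Fubini[of "\<lambda>p. ennreal (indicator {0..y} (snd p) * (v (fst p + snd p))\<^sup>2)"]
    by (subst nn_integral_cmult) auto
  also have "\<dots> = ennreal y * (\<integral>\<^sup>+t. ennreal V * indicator {0..y} t \<partial>lborel)"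
    by (intro arg_cong[where f="(*) _"] nn_integral_cong) (simp add: V indicator_def)
  also have "\<dots> = ennreal (y\<^sup>2 * V)"
    using y V0 by (simp add: nn_integral_cmult_indicator ennreal_mult[symmetric] power2_eq_square mult_ac)
  finally show ?thesis unfolding V_def .
qed

lemma H1_shift_diff_AE_eq_forward_integral:
  assumes H: "H1_with_deriv u v" and y: "y \<ge> 0"
  shows "AE x in lborel. u (x + y) - u x = forward_integral v y x"
proof -
  have u: "L2 u" and v: "L2 v" using H by (auto simp: H1_with_deriv_def)
  have [measurable]: "u \<in> borel_measurable borel" "v \<in> borel_measurable borel"
    using u v by (auto intro: L2_borel_measurable)
  have d: "L2 (\<lambda>x. u (x + y) - u x)" by (rule L2_diff[OF L2_shift[OF u] u])
  have "AE x in lborel. (u (x + y) - u x) - forward_integral v y x = 0"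
  proof (rule AE_zero_if_orthogonal_to_test_funs)
    show "integrable lborel (\<lambda>x. (u (x + y) - u x - forward_integral v y x) * indicator {a..b} x)" for a b
      using Bochner_Integration.integrable_diff[OF integrable_mult_L2[OF d L2_indicator_Icc[of a b]]
          integrable_mult_forward_integral[OF L2_indicator_Icc[of a b] v y]]
      by (simp add: algebra_simps)
    show "(\<integral>x. (u (x + y) - u x - forward_integral v y x) * \<phi> x \<partial>lborel) = 0"
      if \<phi>: "test_fun \<phi>" for \<phi>
      using integrable_mult_L2[OF d test_fun_L2(1)[OF \<phi>]]
        integrable_mult_forward_integral[OF test_fun_L2(1)[OF \<phi>] v y]
        H1_shift_diff_pairing[OF H \<phi> y]
      by (simp add: left_diff_distrib mult.commute[of "\<phi> _"])
  qed measurable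
  then show ?thesis by simp
qed

definition shift_dist_sq :: "(real \<Rightarrow> real) \<Rightarrow> real \<Rightarrow> real" where
  "shift_dist_sq u y = (\<integral>x. (u (x + y) - u x)\<^sup>2 \<partial>lborel)"

lemma shift_dist_sq_nonneg: "0 \<le> shift_dist_sq u y"
  unfolding shift_dist_sq_def by (intro integral_nonneg_AE) auto

lemma shift_dist_sq_minus: "shift_dist_sq u (- y) = shift_dist_sq u y"
  unfolding shift_dist_sq_def
  using lborel_integral_shift[of "\<lambda>x. (u (x + - y) - u x)\<^sup>2" y] by (simp add: power2_commute)

lemma L2_norm_shift_diff: "L2_norm (\<lambda>x. u x - u (x + y)) = sqrt (shift_dist_sq u y)"
  unfolding L2_norm_def shift_dist_sq_def by (simp add: power2_commute)

lemma shift_dist_sq_le_L2: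
  assumes u: "L2 u"
  shows "shift_dist_sq u y \<le> 4 * (\<integral>x. (u x)\<^sup>2 \<partial>lborel)"
proof -
  have i1: "integrable lborel (\<lambda>x. (u (x + y) - u x)\<^sup>2)"
    and i2: "integrable lborel (\<lambda>x. (u (x + y))\<^sup>2)"
    and i3: "integrable lborel (\<lambda>x. (u x)\<^sup>2)"
    using L2_diff[OF L2_shift[OF u] u] L2_shift[OF u] u by (simp_all add: L2_def)
  have "shift_dist_sq u y \<le> (\<integral>x. 2 * (u (x + y))\<^sup>2 + 2 * (u x)\<^sup>2 \<partial>lborel)"
    unfolding shift_dist_sq_def
  proof (rule integral_mono[OF i1])
    show "integrable lborel (\<lambda>x. 2 * (u (x + y))\<^sup>2 + 2 * (u x)\<^sup>2)" using i2 i3 by auto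
    have "0 \<le> (u (x + y) + u x)\<^sup>2" for x by simp
    then show "(u (x + y) - u x)\<^sup>2 \<le> 2 * (u (x + y))\<^sup>2 + 2 * (u x)\<^sup>2" for x
      by (simp add: power2_eq_square algebra_simps)
  qed
  also have "\<dots> = 4 * (\<integral>x. (u x)\<^sup>2 \<partial>lborel)"
    using i2 i3 lborel_integral_shift[of "\<lambda>x. (u x)\<^sup>2" y] by simp
  finally show ?thesis .
qed

lemma shift_dist_sq_le_deriv:
  assumes H: "H1_with_deriv u v"
  shows "shift_dist_sq u y \<le> y\<^sup>2 * (\<integral>x. (v x)\<^sup>2 \<partial>lborel)"
proof -
  have u: "L2 u" and v: "L2 v" using H by (auto simp: H1_with_deriv_def)
  have "shift_dist_sq u y \<le> y\<^sup>2 * (\<integral>x. (v x)\<^sup>2 \<partial>lborel)" if y: "y \<ge> 0" for y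
  proof -
    have "ennreal (shift_dist_sq u y) = (\<integral>\<^sup>+x. ennreal ((u (x + y) - u x)\<^sup>2) \<partial>lborel)"
      unfolding shift_dist_sq_def
      using L2_integrable_sq[OF L2_diff[OF L2_shift[OF u] u]]
      by (subst nn_integral_eq_integral) auto
    also have "\<dots> = (\<integral>\<^sup>+x. ennreal ((forward_integral v y x)\<^sup>2) \<partial>lborel)"
      using H1_shift_diff_AE_eq_forward_integral[OF H y]
      by (intro nn_integral_cong_AE) (auto elim!: eventually_mono)
    also have "\<dots> \<le> ennreal (y\<^sup>2 * (\<integral>x. (v x)\<^sup>2 \<partial>lborel))"
      by (rule nn_integral_forward_integral_sq_le[OF v y])
    finally show ?thesis
      by (subst (asm) ennreal_le_iff) (auto intro!: mult_nonneg_nonneg integral_nonneg_AE)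
  qed
  from this[of "\<bar>y\<bar>"] show ?thesis
    by (cases "y \<ge> 0") (simp_all add: shift_dist_sq_minus[of u "-y", simplified])
qed


lemma H12w_seminorm_bound:
  assumes "0 \<le> C" and admissible: "\<And>y. sqrt (shift_dist_sq u y) \<le> C * sqrt \<bar>y\<bar>"
  shows "0 \<le> H12w_seminorm u" and "shift_dist_sq u y \<le> (H12w_seminorm u)\<^sup>2 * \<bar>y\<bar>"
proof -
  define S where "S = {C. C \<ge> 0 \<and> (\<forall>y. sqrt (shift_dist_sq u y) \<le> C * sqrt \<bar>y\<bar>)}"
  have W: "H12w_seminorm u = Inf S"
    unfolding H12w_seminorm_def S_def L2_norm_shift_diff ..
  have "C \<in> S" using assms unfolding S_def by blast
  then have S: "S \<noteq> {}" by blast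
  show "0 \<le> H12w_seminorm u"
    unfolding W using S by (intro cInf_greatest) (auto simp: S_def)
  show "shift_dist_sq u y \<le> (H12w_seminorm u)\<^sup>2 * \<bar>y\<bar>"
  proof (cases "y = 0")
    case True
    then show ?thesis by (simp add: shift_dist_sq_def)
  next
    case False
    then have sy: "sqrt \<bar>y\<bar> > 0" by simp
    have "sqrt (shift_dist_sq u y) / sqrt \<bar>y\<bar> \<le> Inf S"
      using S sy by (intro cInf_greatest) (auto simp: S_def divide_le_eq)
    then have "sqrt (shift_dist_sq u y) \<le> H12w_seminorm u * sqrt \<bar>y\<bar>"
      using sy by (simp add: W divide_le_eq)
    then have "(sqrt (shift_dist_sq u y))\<^sup>2 \<le> (H12w_seminorm u * sqrt \<bar>y\<bar>)\<^sup>2"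
      using shift_dist_sq_nonneg by (intro power_mono) auto
    then show ?thesis by (simp add: power_mult_distrib shift_dist_sq_nonneg)
  qed
qed

text \<open>Small shifts are controlled by the derivative and large ones by the \<open>L\<^sup>2\<close> norm, so the weak
  seminorm of an \<open>H\<^sup>1\<close> function is finite.\<close>
lemma H1_sqrt_shift_dist_sq_le:
  assumes H: "H1_with_deriv u v"
  shows "sqrt (shift_dist_sq u y)
    \<le> (sqrt (\<integral>x. (v x)\<^sup>2 \<partial>lborel) + 2 * sqrt (\<integral>x. (u x)\<^sup>2 \<partial>lborel)) * sqrt \<bar>y\<bar>"
proof -
  have u: "L2 u" using H by (simp add: H1_with_deriv_def)
  define U where "U = (\<integral>x. (u x)\<^sup>2 \<partial>lborel)"
  define V where "V = (\<integral>x. (v x)\<^sup>2 \<partial>lborel)"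
  have U0: "U \<ge> 0" and V0: "V \<ge> 0"
    unfolding U_def V_def by (intro integral_nonneg_AE; simp)+
  show ?thesis
  proof (cases "\<bar>y\<bar> \<le> 1")
    case True
    have "sqrt (shift_dist_sq u y) \<le> sqrt (y\<^sup>2 * V)"
      using shift_dist_sq_le_deriv[OF H] by (simp add: V_def)
    also have "\<dots> = \<bar>y\<bar> * sqrt V" by (simp add: real_sqrt_mult)
    also have "\<dots> \<le> sqrt \<bar>y\<bar> * sqrt V"
    proof (intro mult_right_mono real_le_rsqrt)
      show "\<bar>y\<bar>\<^sup>2 \<le> \<bar>y\<bar>"
        using True mult_left_le_one_le[of "\<bar>y\<bar>" "\<bar>y\<bar>"] by (simp add: power2_eq_square)
    qed (use V0 in simp)
    finally have "sqrt (shift_dist_sq u y) \<le> sqrt V * sqrt \<bar>y\<bar>" by (simp add: mult.commute)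
    moreover have "0 \<le> 2 * sqrt U * sqrt \<bar>y\<bar>" using U0 by simp
    ultimately show ?thesis
      unfolding U_def[symmetric] V_def[symmetric] by (simp add: distrib_right)
  next
    case False
    have "sqrt (shift_dist_sq u y) \<le> sqrt (4 * U)"
      using shift_dist_sq_le_L2[OF u] by (simp add: U_def)
    also have "\<dots> = 2 * sqrt U" by (simp add: real_sqrt_mult)
    also have "\<dots> \<le> 2 * sqrt U * sqrt \<bar>y\<bar>" using False U0 by (simp add: mult_le_cancel_left1)
    finally have "sqrt (shift_dist_sq u y) \<le> 2 * sqrt U * sqrt \<bar>y\<bar>" .
    moreover have "0 \<le> sqrt V * sqrt \<bar>y\<bar>" using V0 by simp
    ultimately show ?thesis
      unfolding U_def[symmetric] V_def[symmetric] by (simp add: distrib_right)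
  qed
qed

section \<open>Integrating the shift estimates\<close>

lemma H12_seminorm_sq_eq_nn_integral_shift_dist_sq:
  assumes u: "L2 u"
  shows "H12_seminorm_sq u = (\<integral>\<^sup>+y. ennreal (shift_dist_sq u y / y\<^sup>2) \<partial>lborel)"
proof -
  have [measurable]: "u \<in> borel_measurable borel" using u by (auto intro: L2_borel_measurable)
  have "H12_seminorm_sq u = (\<integral>\<^sup>+y. (\<integral>\<^sup>+x. ennreal ((u (x + y) - u x)\<^sup>2 / y\<^sup>2) \<partial>lborel) \<partial>lborel)"
    unfolding H12_seminorm_sq_def
    using lborel_pair.nn_integral_snd[of "\<lambda>p. ennreal ((u (fst p + snd p) - u (fst p))\<^sup>2 / (snd p)\<^sup>2)"]
    by simp
  also have "\<dots> = (\<integral>\<^sup>+y. ennreal (shift_dist_sq u y / y\<^sup>2) \<partial>lborel)"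
    using L2_integrable_sq[OF L2_diff[OF L2_shift[OF u] u]]
    by (intro nn_integral_cong) (simp add: nn_integral_eq_integral shift_dist_sq_def)
  finally show ?thesis .
qed

lemma nn_integral_even_le:
  fixes f :: "real \<Rightarrow> ennreal"
  assumes [measurable]: "f \<in> borel_measurable borel" and even: "\<And>x. f (- x) = f x"
  shows "(\<integral>\<^sup>+x. f x \<partial>lborel) \<le> 2 * (\<integral>\<^sup>+x. f x * indicator {0..} x \<partial>lborel)"
proof -
  have "(\<integral>\<^sup>+x. f x \<partial>lborel) \<le> (\<integral>\<^sup>+x. f x * indicator {0..} x + f x * indicator {..0} x \<partial>lborel)"
    by (intro nn_integral_mono) (auto simp: indicator_def)
  also have "\<dots> = (\<integral>\<^sup>+x. f x * indicator {0..} x \<partial>lborel) + (\<integral>\<^sup>+x. f x * indicator {..0} x \<partial>lborel)"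
    by (rule nn_integral_add) auto
  also have "(\<integral>\<^sup>+x. f x * indicator {..0} x \<partial>lborel)
      = (\<integral>\<^sup>+x. f (0 + (-1) * x) * indicator {..0} (0 + (-1) * x) \<partial>lborel)"
    using nn_integral_real_affine[of "\<lambda>x. f x * indicator {..0} x" "-1" 0] by simp
  also have "\<dots> = (\<integral>\<^sup>+x. f x * indicator {0..} x \<partial>lborel)"
    by (intro nn_integral_cong) (auto simp: even indicator_def)
  finally show ?thesis by (simp add: mult_2)
qed

lemma nn_integral_inverse_sq_atLeast_1:
  assumes "K \<ge> 0"
  shows "(\<integral>\<^sup>+y. ennreal (K / y\<^sup>2) * indicator {1..} y \<partial>lborel) = ennreal K"
proof -
  have "(\<integral>\<^sup>+y. ennreal (K / y\<^sup>2) * indicator {1..} y \<partial>lborel) = ennreal (0 - (- K / 1))"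
  proof (rule nn_integral_FTC_atLeast[where F="\<lambda>y. - K / y"])
    show "((\<lambda>y. - K / y) has_real_derivative K / y\<^sup>2) (at y)" if "1 \<le> y" for y
      using that by (auto intro!: derivative_eq_intros simp: power2_eq_square)
    show "((\<lambda>y. - K / y) \<longlongrightarrow> 0) at_top"
      by (intro tendsto_minus_cancel_left[THEN iffD1] tendsto_divide_0[OF tendsto_const])
        (auto intro: filterlim_at_top_imp_at_infinity filterlim_ident)
  qed (use assms in auto)
  then show ?thesis by simp
qed

lemma nn_integral_inverse_Icc_1:
  assumes "K \<ge> 0" "0 < m" "m \<le> 1"
  shows "(\<integral>\<^sup>+y. ennreal (K / y) * indicator {m..1} y \<partial>lborel) = ennreal (- K * ln m)"
proof -
  have "(\<integral>\<^sup>+y. ennreal (K / y) * indicator {m..1} y \<partial>lborel) = ennreal (K * ln 1 - K * ln m)"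
  proof (rule nn_integral_FTC_Icc[where F="\<lambda>y. K * ln y"])
    show "((\<lambda>y. K * ln y) has_real_derivative K / y) (at y)" if "y \<in> {m..1}" for y
      using that assms by (auto intro!: derivative_eq_intros simp: field_simps)
  qed (use assms in auto)
  then show ?thesis by simp
qed

text \<open>The three bounds on \<open>T\<close> are used for \<open>|y| \<ge> 1\<close>, \<open>|y| \<le> m\<close> and \<open>m \<le> |y| \<le> 1\<close> respectively;
  the last range produces the logarithm.\<close>
lemma nn_integral_div_sq_le_three_regimes:
  fixes T :: "real \<Rightarrow> real"
  assumes m: "0 < m" "m \<le> 1" and nonneg: "0 \<le> A" "0 \<le> B" "0 \<le> C"
    and large: "\<And>y. T y \<le> A" and small: "\<And>y. T y \<le> B * y\<^sup>2" and middle: "\<And>y. T y \<le> C * \<bar>y\<bar>"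
  shows "(\<integral>\<^sup>+y. ennreal (T y / y\<^sup>2) \<partial>lborel) \<le> ennreal (2 * (A + B * m - C * ln m))"
proof -
  let ?h = "\<lambda>y. ennreal (A / y\<^sup>2) * indicator {1..} \<bar>y\<bar> + ennreal B * indicator {0..m} \<bar>y\<bar>
    + ennreal (C / \<bar>y\<bar>) * indicator {m..1} \<bar>y\<bar>"
  have sum_le: "a \<le> a + b + c" "b \<le> a + b + c" "c \<le> a + b + c" for a b c :: ennreal
    by (simp_all add: add.assoc add_increasing2 add_increasing)
  have "ennreal (T y / y\<^sup>2) \<le> ?h y" for y
  proof (cases "y = 0")
    case False
    then have y2: "y\<^sup>2 > 0" by simp
    consider "1 \<le> \<bar>y\<bar>" | "\<bar>y\<bar> \<le> m" | "m \<le> \<bar>y\<bar> \<and> \<bar>y\<bar> \<le> 1" by linarith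
    then show ?thesis
    proof cases
      case 1
      have "T y / y\<^sup>2 \<le> A / y\<^sup>2" using large y2 by (intro divide_right_mono) auto
      with 1 show ?thesis by (intro order.trans[OF _ sum_le(1)]) (simp add: ennreal_leI)
    next
      case 2
      have "T y / y\<^sup>2 \<le> B" using small y2 by (simp add: divide_le_eq mult.commute)
      with 2 show ?thesis by (intro order.trans[OF _ sum_le(2)]) (simp add: ennreal_leI)
    next
      case 3
      have "T y / y\<^sup>2 \<le> C * \<bar>y\<bar> / y\<^sup>2" using middle y2 by (intro divide_right_mono) auto
      also have "\<dots> = C / \<bar>y\<bar>" using False by (simp add: power2_eq_square divide_simps)
      finally show ?thesis using 3 by (intro order.trans[OF _ sum_le(3)]) (simp add: ennreal_leI)
    qed
  qed simp
  then have "(\<integral>\<^sup>+y. ennreal (T y / y\<^sup>2) \<partial>lborel) \<le> (\<integral>\<^sup>+y. ?h y \<partial>lborel)"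
    by (rule nn_integral_mono)
  also have "\<dots> \<le> 2 * (\<integral>\<^sup>+y. ?h y * indicator {0..} y \<partial>lborel)"
    by (rule nn_integral_even_le) auto
  also have "(\<integral>\<^sup>+y. ?h y * indicator {0..} y \<partial>lborel)
      \<le> (\<integral>\<^sup>+y. ennreal (A / y\<^sup>2) * indicator {1..} y + ennreal B * indicator {0..m} y
        + ennreal (C / y) * indicator {m..1} y \<partial>lborel)"
    by (intro nn_integral_mono) (auto simp: indicator_def)
  also have "\<dots> = (\<integral>\<^sup>+y. ennreal (A / y\<^sup>2) * indicator {1..} y \<partial>lborel)
      + (\<integral>\<^sup>+y. ennreal B * indicator {0..m} y \<partial>lborel)
      + (\<integral>\<^sup>+y. ennreal (C / y) * indicator {m..1} y \<partial>lborel)"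
    by (simp add: nn_integral_add)
  also have "\<dots> = ennreal A + ennreal B * ennreal m + ennreal (- C * ln m)"
    using m nonneg nn_integral_inverse_sq_atLeast_1[of A] nn_integral_inverse_Icc_1[of C m]
    by (simp add: nn_integral_cmult_indicator)
  also have "\<dots> = ennreal (A + B * m - C * ln m)"
  proof -
    have "0 \<le> - C * ln m" "0 \<le> B * m" "0 \<le> A + B * m"
      using m nonneg by (simp_all add: mult_nonneg_nonpos)
    then show ?thesis
      using m nonneg
      by (simp only: diff_conv_add_uminus minus_mult_left ennreal_plus ennreal_mult
          order.strict_implies_order)
  qed
  finally have "(\<integral>\<^sup>+y. ennreal (T y / y\<^sup>2) \<partial>lborel) \<le> 2 * ennreal (A + B * m - C * ln m)"
    by (simp add: mult_left_mono)
  moreover have "0 \<le> A + B * m - C * ln m"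
  proof -
    have "C * ln m \<le> 0" using m nonneg by (simp add: mult_nonneg_nonpos)
    moreover have "0 \<le> B * m" using m nonneg by simp
    ultimately show ?thesis using nonneg by linarith
  qed
  ultimately show ?thesis
    using ennreal_mult[of 2 "A + B * m - C * ln m"] by simp
qed


theorem proposition12:
  "\<exists>C::real. C > 0 \<and> (\<forall>(\<alpha>::real) u v. \<alpha> > 0 \<longrightarrow> H1_with_deriv u v \<longrightarrow>
     H12_seminorm_sq u \<le> ennreal (C * ((L2_norm u)\<^sup>2 + \<bar>ln \<alpha>\<bar> * (H12w_seminorm u)\<^sup>2
        + \<alpha> * (\<integral>x. (v x)\<^sup>2 \<partial>lborel))))"
proof (intro exI[of _ 8] conjI allI impI)
  fix \<alpha> :: real and u v :: "real \<Rightarrow> real"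
  assume \<alpha>: "\<alpha> > 0" and H: "H1_with_deriv u v"
  have u: "L2 u" using H by (simp add: H1_with_deriv_def)
  define U where "U = (\<integral>x. (u x)\<^sup>2 \<partial>lborel)"
  define V where "V = (\<integral>x. (v x)\<^sup>2 \<partial>lborel)"
  define W where "W = H12w_seminorm u"
  define m where "m = min \<alpha> 1"
  have U0: "U \<ge> 0" and V0: "V \<ge> 0"
    unfolding U_def V_def by (intro integral_nonneg_AE; simp)+
  note W_bounds = H12w_seminorm_bound[OF _ H1_sqrt_shift_dist_sq_le[OF H], folded W_def]
  have "H12_seminorm_sq u = (\<integral>\<^sup>+y. ennreal (shift_dist_sq u y / y\<^sup>2) \<partial>lborel)"
    by (rule H12_seminorm_sq_eq_nn_integral_shift_dist_sq[OF u])
  also have "\<dots> \<le> ennreal (2 * (4 * U + V * m - W\<^sup>2 * ln m))"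
    using \<alpha> U0 V0 W_bounds shift_dist_sq_le_L2[OF u] shift_dist_sq_le_deriv[OF H]
    by (intro nn_integral_div_sq_le_three_regimes) (auto simp: m_def U_def V_def mult.commute)
  also have "\<dots> \<le> ennreal (8 * (U + \<bar>ln \<alpha>\<bar> * W\<^sup>2 + \<alpha> * V))"
  proof (rule ennreal_leI)
    have "- ln m \<le> \<bar>ln \<alpha>\<bar>" using \<alpha> by (cases "\<alpha> \<le> 1") (auto simp: m_def)
    from mult_right_mono[OF this, of "W\<^sup>2"]
    have "- (W\<^sup>2 * ln m) \<le> \<bar>ln \<alpha>\<bar> * W\<^sup>2" by (simp add: algebra_simps)
    moreover have "V * m \<le> \<alpha> * V" using V0 by (simp add: m_def mult.commute mult_left_mono)
    moreover have "0 \<le> \<bar>ln \<alpha>\<bar> * W\<^sup>2" "0 \<le> \<alpha> * V" using \<alpha> V0 by simp_all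
    ultimately show "2 * (4 * U + V * m - W\<^sup>2 * ln m) \<le> 8 * (U + \<bar>ln \<alpha>\<bar> * W\<^sup>2 + \<alpha> * V)"
      by (smt (verit))
  qed
  also have "U = (L2_norm u)\<^sup>2" using U0 by (simp add: L2_norm_def U_def)
  finally show "H12_seminorm_sq u \<le> ennreal (8 * ((L2_norm u)\<^sup>2 + \<bar>ln \<alpha>\<bar> * (H12w_seminorm u)\<^sup>2
      + \<alpha> * (\<integral>x. (v x)\<^sup>2 \<partial>lborel)))"
    by (simp add: V_def W_def)
qed simp

end
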